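(* Let $M,N,K$ be positive integers, let $s,r$ be integers with $1\le r\le \min\{s,K\}$ and $s\le N$, and let $A\in\mathbb{R}^{M\times N}$. Suppose the map $Z\mapsto AZ$ is injective on $\Sigma_{s,r}$. Then for every $X\in\Sigma_s$ we have $\operatorname{rank}(X)=\operatorname{rank}(AX)$.
   Context: A matrix $X\in\mathbb{R}^{N\times K}$ is called $s$-row sparse if at most $s$ of its rows are non-zero. $\Sigma_s$ denotes the set of all $s$-row sparse matrices in $\mathbb{R}^{N\times K}$, and $\Sigma_{s,r}$ denotes the set of all $s$-row sparse matrices in $\mathbb{R}^{N\times K}$ of rank at least $r$. *)

theory Defs
  imports "HOL-Analysis.Analysis"
begin

text \<open>Matrices in R^(N x K) are represented as real^'k^'n (rows indexed by 'n, N = CARD('n),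
  K = CARD('k)). Row i of X is X $ i.\<close>

definition Sigma_s :: "nat \<Rightarrow> (real^'k^'n) set" where
  "Sigma_s s = {X. card {i. X $ i \<noteq> 0} \<le> s}"

definition Sigma_sr :: "nat \<Rightarrow> nat \<Rightarrow> (real^'k^'n) set" where
  "Sigma_sr s r = {X. X \<in> Sigma_s s \<and> rank X \<ge> r}"

end

theory Submission
  imports Defs
begin

text \<open>If \<open>rank (A X) < rank X\<close>, then \<open>A\<close> kills a nonzero vector \<open>v = X y\<close> of the column space
  of \<open>X\<close>, and \<open>v\<close> is supported on the at most \<open>s\<close> nonzero rows of \<open>X\<close>. Pick a row \<open>j\<close> with
  \<open>v\<^sub>j \<noteq> 0\<close> and a set \<open>T\<close> of \<open>s\<close> rows containing the support of \<open>v\<close>. A matrix with one column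
  \<open>v\<close> and \<open>r - 1\<close> further columns \<open>e\<^sub>t\<close> for distinct \<open>t \<in> T - {j}\<close> lies in \<open>\<Sigma>\<^sub>s\<^sub>,\<^sub>r\<close>, and so does
  the matrix obtained by replacing \<open>v\<close> with \<open>2 v\<close>; both have the same image under \<open>A\<close>,
  contradicting injectivity.\<close>

lemma rank_mul_eq_if_inj_on_range:
  fixes A :: "real^'n^'m" and X :: "real^'k^'n"
  assumes "\<And>y. A *v (X *v y) = 0 \<Longrightarrow> X *v y = 0"
  shows "rank (A ** X) = rank X"
proof -
  let ?R = "range ((*v) X)"
  have "span ?R = ?R"
    by (simp add: linear_subspace_image subspace_UNIV span_eq_iff)
  moreover have "inj_on ((*v) A) ?R"
    using assms by (auto simp: linear_inj_on_iff_eq_0[OF matrix_vector_mul_linear]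
          subspace_UNIV linear_subspace_image)
  ultimately have "dim ((*v) A ` ?R) = dim ?R"
    by (metis dim_image_eq matrix_vector_mul_linear)
  then show ?thesis
    by (simp add: rank_dim_range image_comp o_def matrix_vector_mul_assoc)
qed

lemma card_nonzero_rows_matrix_vector_mult_le:
  fixes X :: "real^'k^'n"
  shows "card {i. (X *v y) $ i \<noteq> 0} \<le> card {i. X $ i \<noteq> 0}"
  by (rule card_mono) (auto simp: matrix_vector_mult_def)

text \<open>\<open>transpose (\<chi> c. f c)\<close> is the matrix whose column \<open>c\<close> is \<open>f c\<close>.\<close>

lemma rank_transpose_vec_lambda:
  fixes f :: "'k::finite \<Rightarrow> real^'n"
  shows "rank (transpose (\<chi> c. f c)) = dim (range f)"
proof -
  have "rows (\<chi> c. f c) = range f"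
    by (auto simp: rows_def row_def)
  then show ?thesis
    by (metis rank_transpose row_rank_def)
qed

lemma transpose_vec_lambda_nth_eq_0:
  "transpose (\<chi> c. f c) $ i = 0 \<longleftrightarrow> (\<forall>c. f c $ i = 0)"
  by (simp add: transpose_def vec_eq_iff)

lemma matrix_mul_transpose_vec_lambda:
  fixes A :: "real^'n^'m" and f :: "'k::finite \<Rightarrow> real^'n"
  shows "A ** transpose (\<chi> c. f c) = transpose (\<chi> c. A *v f c)"
  by (simp add: vec_eq_iff transpose_def matrix_matrix_mult_def matrix_vector_mult_def)

lemma independent_insert_axes:
  fixes w :: "real^'n"
  assumes "w $ j \<noteq> 0" and "j \<notin> U"
  shows "independent (insert w ((\<lambda>t. axis t 1) ` U))"
    and "card (insert w ((\<lambda>t. axis t 1) ` U)) = Suc (card U)"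
proof -
  let ?B = "(\<lambda>t. axis t (1::real)) ` U"
  have "?B \<subseteq> Basis"
    by (auto simp: Basis_vec_def cart_basis_def)
  then have "independent ?B"
    using independent_Basis independent_mono by blast
  have "span ?B \<subseteq> {x. x $ j = 0}"
    using assms(2) by (intro span_minimal) (auto simp: subspace_def axis_def)
  then have "w \<notin> span ?B"
    using assms(1) by auto
  then show "independent (insert w ?B)"
    using \<open>independent ?B\<close> by (rule independent_insertI)
  have "card ?B = card U"
    by (simp add: card_image inj_on_def axis_eq_axis)
  moreover have "w \<notin> ?B"
    using assms by (auto simp: axis_def split: if_splits)
  ultimately show "card (insert w ?B) = Suc (card U)"
    by simp
qed

lemma transpose_vec_lambda_in_Sigma_sr:
  fixes f :: "'k::finite \<Rightarrow> real^'n"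
  assumes "\<And>c. {i. f c $ i \<noteq> 0} \<subseteq> T" and "card T \<le> s"
    and "independent B" and "B \<subseteq> range f" and "r \<le> card B"
  shows "transpose (\<chi> c. f c) \<in> Sigma_sr s r"
proof -
  have "{i. transpose (\<chi> c. f c) $ i \<noteq> 0} \<subseteq> T"
    using assms(1) by (auto simp: transpose_vec_lambda_nth_eq_0)
  then have "card {i. transpose (\<chi> c. f c) $ i \<noteq> 0} \<le> s"
    using card_mono[OF finite] assms(2) order_trans by blast
  moreover have "r \<le> rank (transpose (\<chi> c. f c))"
    using independent_card_le_dim[OF assms(4,3)] assms(5)
    by (simp add: rank_transpose_vec_lambda)
  ultimately show ?thesis
    by (simp add: Sigma_sr_def Sigma_s_def)
qed

lemma not_inj_on_Sigma_sr_if_null_vector: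
  fixes A :: "real^'n^'m" and v :: "real^'n"
  assumes "v \<noteq> 0" and "A *v v = 0" and "card {i. v $ i \<noteq> 0} \<le> s"
    and "s \<le> CARD('n)" and "1 \<le> r" and "r \<le> s" and "r \<le> CARD('k)"
  shows "\<not> inj_on (\<lambda>Z::real^'k^'n. A ** Z) (Sigma_sr s r)"
proof -
  obtain j where "v $ j \<noteq> 0"
    using \<open>v \<noteq> 0\<close> by (metis vec_eq_iff zero_index)
  obtain T where "{i. v $ i \<noteq> 0} \<subseteq> T" and "card T = s"
    using exists_subset_between[of "{i. v $ i \<noteq> 0}" s UNIV] assms(3,4) by auto
  with \<open>v $ j \<noteq> 0\<close> assms(6) have "r - 1 \<le> card (T - {j})"
    by auto
  then obtain U where "U \<subseteq> T - {j}" and "card U = r - 1"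
    by (meson obtain_subset_with_card_n)
  then have "j \<notin> U"
    by blast
  fix c0 :: 'k
  have "r - 1 \<le> card (UNIV - {c0})"
    using assms(7) by (simp add: card_Diff_subset)
  then obtain C where "c0 \<notin> C" and "card C = r - 1"
    by (metis obtain_subset_with_card_n Diff_iff insertI1 subsetD)
  then obtain g where g: "bij_betw g C U"
    using finite_same_card_bij[of C U] \<open>card U = r - 1\<close> by auto
  define Z :: "real^'n \<Rightarrow> real^'k^'n" where
    "Z w = transpose (\<chi> c. if c = c0 then w else if c \<in> C then axis (g c) 1 else 0)" for w
  have Z_in: "Z w \<in> Sigma_sr s r" if "w $ j \<noteq> 0" and "{i. w $ i \<noteq> 0} \<subseteq> T" for w
    unfolding Z_def
  proof (rule transpose_vec_lambda_in_Sigma_sr)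
    let ?B = "insert w ((\<lambda>t. axis t 1) ` U)"
    show "{i. (if c = c0 then w else if c \<in> C then axis (g c) 1 else 0) $ i \<noteq> 0} \<subseteq> T" for c
      using that(2) g \<open>U \<subseteq> T - {j}\<close> by (auto simp: axis_def bij_betw_def)
    show "card T \<le> s"
      using \<open>card T = s\<close> by simp
    show "independent ?B" and "r \<le> card ?B"
      using independent_insert_axes[OF that(1) \<open>j \<notin> U\<close>] \<open>card U = r - 1\<close> assms(5) by auto
    show "?B \<subseteq> range (\<lambda>c. if c = c0 then w else if c \<in> C then axis (g c) 1 else 0)"
      using g \<open>c0 \<notin> C\<close> by (force simp: bij_betw_def)
  qed
  have "Z v \<noteq> Z (2 *\<^sub>R v)"
  proof
    assume "Z v = Z (2 *\<^sub>R v)"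
    then have "column c0 (Z v) $ j = column c0 (Z (2 *\<^sub>R v)) $ j"
      by simp
    then show False
      using \<open>v $ j \<noteq> 0\<close> by (simp add: Z_def row_def)
  qed
  moreover have "A ** Z v = A ** Z (2 *\<^sub>R v)"
  proof -
    have "A *v (2 *\<^sub>R v) = A *v v"
      using assms(2) by (simp add: matrix_vector_mult_scaleR)
    then show ?thesis
      by (simp only: Z_def matrix_mul_transpose_vec_lambda if_distrib[of "(*v) A"])
  qed
  moreover have "Z v \<in> Sigma_sr s r" and "Z (2 *\<^sub>R v) \<in> Sigma_sr s r"
    using Z_in \<open>v $ j \<noteq> 0\<close> \<open>{i. v $ i \<noteq> 0} \<subseteq> T\<close> by auto
  ultimately show ?thesis
    by (meson inj_onD)
qed

theorem proposition1:
  fixes A :: "real^'n^'m" and s r :: nat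
  assumes "1 \<le> r" and "r \<le> min s CARD('k)" and "s \<le> CARD('n)"
    and "inj_on (\<lambda>Z::real^'k^'n. A ** Z) (Sigma_sr s r)"
  shows "\<forall>X::real^'k^'n. X \<in> Sigma_s s \<longrightarrow> rank X = rank (A ** X)"
proof (intro allI impI)
  fix X :: "real^'k^'n"
  assume "X \<in> Sigma_s s"
  show "rank X = rank (A ** X)"
  proof (rule ccontr)
    assume "rank X \<noteq> rank (A ** X)"
    then obtain y where "X *v y \<noteq> 0" and "A *v (X *v y) = 0"
      using rank_mul_eq_if_inj_on_range by metis
    moreover have "card {i. (X *v y) $ i \<noteq> 0} \<le> s"
      using card_nonzero_rows_matrix_vector_mult_le[of X y] \<open>X \<in> Sigma_s s\<close>
      by (simp add: Sigma_s_def)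
    ultimately show False
      using not_inj_on_Sigma_sr_if_null_vector assms by auto
  qed
qed

end
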